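(* Let $b\ge 0$ and $h\ge 2b+1$ be integers. Let $K$ be the complete directed graph (without self-loops) on a set $H$ of $h$ vertices, i.e. $(i,j)$ is an edge for all distinct $i,j\in H$. Let $R$ be any graph obtained from $K$ by deleting, for each vertex, an arbitrary set of $b$ of its incoming edges. Then $R$ contains a source component, i.e. a vertex $v_0\in H$ having a directed path in $R$ to every other vertex of $H$.
   Context: In the paper's setting, $H$ is the set of honest nodes among $m=h+b$ nodes with $b<\frac{1}{3}m$ (so $h\ge 2b+1$), and a graph $R$ as in the claim is called a reduced graph (of the complete graph on all $m$ nodes, after deleting the $b$ Byzantine nodes with their edges). *)

theory Defs
  imports Main
begin

definition complete_digraph :: "'a set \<Rightarrow> ('a \<times> 'a) set" where
  "complete_digraph H = {(i, j). i \<in> H \<and> j \<in> H \<and> i \<noteq> j}"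

definition reduced_graph :: "'a set \<Rightarrow> nat \<Rightarrow> ('a \<times> 'a) set \<Rightarrow> bool" where
  "reduced_graph H b R \<longleftrightarrow> R \<subseteq> complete_digraph H \<and>
     (\<forall>j\<in>H. card {i. (i, j) \<in> complete_digraph H \<and> (i, j) \<notin> R} = b)"

end

theory Submission
  imports Defs
begin

text \<open>Every vertex keeps all but b of its h - 1 possible in-neighbours, so it has at least
  h - b ancestors (itself included). Since h \<ge> 2b + 1, any two vertices have more than h
  ancestors in total and hence a common ancestor. A vertex with the largest set of
  descendants is then a root: if it missed some vertex v, a common ancestor of the two would
  have strictly more descendants.\<close>

lemma card_le_card_in_neighbours_reduced_graph:
  assumes "finite H" and "reduced_graph H b R" and "u \<in> H"
  shows "card H \<le> card {i\<in>H. (i, u) \<in> R} + b + 1"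
proof -
  let ?deleted = "{i. (i, u) \<in> complete_digraph H \<and> (i, u) \<notin> R}"
  have "card ?deleted = b"
    using assms(2,3) unfolding reduced_graph_def by blast
  have "H - {u} \<subseteq> {i\<in>H. (i, u) \<in> R} \<union> ?deleted"
    using assms(3) by (auto simp: complete_digraph_def)
  then have "card (H - {u}) \<le> card ({i\<in>H. (i, u) \<in> R} \<union> ?deleted)"
    using assms(1) by (intro card_mono) (auto simp: complete_digraph_def)
  also have "\<dots> \<le> card {i\<in>H. (i, u) \<in> R} + card ?deleted"
    by (rule card_Un_le)
  finally show ?thesis
    using \<open>card ?deleted = b\<close> assms(1,3) by simp
qed

lemma card_le_card_ancestors_reduced_graph:
  assumes "finite H" and "reduced_graph H b R" and "u \<in> H"
  shows "card H \<le> card {x\<in>H. (x, u) \<in> R\<^sup>*} + b"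
proof -
  have "u \<notin> {i\<in>H. (i, u) \<in> R}"
    using assms(2) unfolding reduced_graph_def complete_digraph_def by auto
  then have "card {i\<in>H. (i, u) \<in> R} + 1 = card (insert u {i\<in>H. (i, u) \<in> R})"
    using assms(1) by simp
  also have "\<dots> \<le> card {x\<in>H. (x, u) \<in> R\<^sup>*}"
    using assms(1,3) by (intro card_mono) auto
  finally show ?thesis
    using card_le_card_in_neighbours_reduced_graph[OF assms] by linarith
qed

lemma subsets_intersect_if_card_add_gt:
  assumes "finite H" and "A \<subseteq> H" and "B \<subseteq> H" and "card H < card A + card B"
  shows "A \<inter> B \<noteq> {}"
proof
  assume "A \<inter> B = {}"
  then have "card A + card B = card (A \<union> B)"
    using assms(1-3) by (simp add: card_Un_disjoint finite_subset)
  also have "\<dots> \<le> card H"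
    using assms(1-3) by (intro card_mono) auto
  finally show False
    using assms(4) by simp
qed

lemma common_ancestor_reduced_graph:
  assumes "finite H" and "card H \<ge> 2 * b + 1" and "reduced_graph H b R"
    and "u \<in> H" and "w \<in> H"
  obtains c where "c \<in> H" and "(c, u) \<in> R\<^sup>*" and "(c, w) \<in> R\<^sup>*"
proof -
  have "{x\<in>H. (x, u) \<in> R\<^sup>*} \<inter> {x\<in>H. (x, w) \<in> R\<^sup>*} \<noteq> {}"
    using card_le_card_ancestors_reduced_graph[OF assms(1,3,4)]
      card_le_card_ancestors_reduced_graph[OF assms(1,3,5)] assms(1,2)
    by (intro subsets_intersect_if_card_add_gt) auto
  then show ?thesis
    using that by blast
qed

lemma exists_root_if_common_ancestors:
  assumes "finite H" and "H \<noteq> {}"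
    and common: "\<And>u w. u \<in> H \<Longrightarrow> w \<in> H \<Longrightarrow> \<exists>c\<in>H. (c, u) \<in> R\<^sup>* \<and> (c, w) \<in> R\<^sup>*"
  shows "\<exists>v0\<in>H. \<forall>v\<in>H. (v0, v) \<in> R\<^sup>*"
proof -
  define descendants where "descendants v = {u\<in>H. (v, u) \<in> R\<^sup>*}" for v
  have "Max (card ` descendants ` H) \<in> card ` descendants ` H"
    using assms(1,2) by (intro Max_in) auto
  then obtain v0 where "v0 \<in> H" and "card (descendants v0) = Max (card ` descendants ` H)"
    by auto
  then have v0_max: "card (descendants c) \<le> card (descendants v0)" if "c \<in> H" for c
    using assms(1) that by simp
  have "v \<in> descendants v0" if "v \<in> H" for v
  proof (rule ccontr)
    assume "v \<notin> descendants v0"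
    obtain c where "c \<in> H" and "(c, v0) \<in> R\<^sup>*" and "(c, v) \<in> R\<^sup>*"
      using common[OF \<open>v0 \<in> H\<close> \<open>v \<in> H\<close>] by blast
    then have "descendants v0 \<subset> descendants c"
      using \<open>v \<in> H\<close> \<open>v \<notin> descendants v0\<close> unfolding descendants_def
      by (auto intro: rtrancl_trans)
    then have "card (descendants v0) < card (descendants c)"
      using assms(1) by (intro psubset_card_mono) (auto simp: descendants_def)
    with v0_max[OF \<open>c \<in> H\<close>] show False
      by simp
  qed
  then show ?thesis
    using \<open>v0 \<in> H\<close> unfolding descendants_def by blast
qed

theorem lemma1:
  fixes H :: "'a set" and b h :: nat and R :: "('a \<times> 'a) set"
  assumes "finite H" and "card H = h" and "h \<ge> 2 * b + 1"
    and "reduced_graph H b R"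
  shows "\<exists>v0\<in>H. \<forall>v\<in>H. v \<noteq> v0 \<longrightarrow> (v0, v) \<in> R\<^sup>+"
proof -
  have "H \<noteq> {}"
    using assms(2,3) by auto
  moreover have "\<exists>c\<in>H. (c, u) \<in> R\<^sup>* \<and> (c, w) \<in> R\<^sup>*" if "u \<in> H" and "w \<in> H" for u w
    using common_ancestor_reduced_graph[OF assms(1) _ assms(4) that] assms(2,3) by metis
  ultimately obtain v0 where "v0 \<in> H" and "\<forall>v\<in>H. (v0, v) \<in> R\<^sup>*"
    using exists_root_if_common_ancestors[OF assms(1)] by blast
  then show ?thesis
    by (auto simp: rtrancl_eq_or_trancl)
qed

end
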